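(* Let $G$ be a graph and $D\subseteq V(G)$ such that $V(G)\setminus D$ is a finite set of vertices of finite degree. Let $c:D\to\{0,1\}$ be a coloring of the induced subgraph $G[D]$ which is strongly maximal (in all of $D$, as a coloring of $G[D]$). Then every extension $\tilde c:V(G)\to\{0,1\}$ of $c$ is almost strongly maximal in $D$ (as a coloring of $G$).
   Context: Graphs are simple, undirected, possibly infinite; degree of $v$ is $|N(v)|$; $G[D]$ is the induced subgraph. A coloring of a graph $\Gamma$ is a map $V(\Gamma)\to\{0,1\}$. $\mathit{trans}(c)=\{uv\in E(\Gamma):c(u)\neq c(v)\}$; $c*F$ differs from $c$ exactly on $F$; for finite $F$ consisting of vertices of finite degree, $\mathit{dtrans}(c,F)=|\mathit{trans}(c)\setminus\mathit{trans}(c*F)|-|\mathit{trans}(c*F)\setminus\mathit{trans}(c)|$. $c$ is strongly maximal in $A$ if $\mathit{dtrans}(c,F)\ge0$ for every finite $F\subseteq A$ consisting of vertices of finite degree. Colorings $c,c'$ are close in $A$ if $c\triangle c'=\{v:c(v)\neq c'(v)\}$ is finite, consists of vertices of finite degree, and is contained in $A$. $c$ is almost strongly maximal in $A$ if it is close in $A$ to a coloring strongly maximal in $A$. *)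

theory Defs
  imports Main
begin

text \<open>A (possibly infinite) simple undirected graph is given by a vertex set V and a
symmetric, irreflexive adjacency relation E; only edges with both ends in V count.
An induced subgraph G[D] is represented by the pair (D, E).
A coloring is a map to bool (= {0,1}); only its values on V matter.\<close>

definition simple_graph :: "'a set \<Rightarrow> ('a \<Rightarrow> 'a \<Rightarrow> bool) \<Rightarrow> bool" where
  "simple_graph V E \<longleftrightarrow> (\<forall>u\<in>V. \<forall>v\<in>V. E u v \<longrightarrow> E v u) \<and> (\<forall>v\<in>V. \<not> E v v)"

definition nbhd :: "'a set \<Rightarrow> ('a \<Rightarrow> 'a \<Rightarrow> bool) \<Rightarrow> 'a \<Rightarrow> 'a set" where
  "nbhd V E v = {u\<in>V. E v u}"

definition finite_deg :: "'a set \<Rightarrow> ('a \<Rightarrow> 'a \<Rightarrow> bool) \<Rightarrow> 'a \<Rightarrow> bool" where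
  "finite_deg V E v \<longleftrightarrow> finite (nbhd V E v)"

definition trans_edges :: "'a set \<Rightarrow> ('a \<Rightarrow> 'a \<Rightarrow> bool) \<Rightarrow> ('a \<Rightarrow> bool) \<Rightarrow> 'a set set" where
  "trans_edges V E c = {{u, v} | u v. u \<in> V \<and> v \<in> V \<and> E u v \<and> c u \<noteq> c v}"

definition flip :: "('a \<Rightarrow> bool) \<Rightarrow> 'a set \<Rightarrow> 'a \<Rightarrow> bool" where
  "flip c F = (\<lambda>v. if v \<in> F then \<not> c v else c v)"

definition dtrans :: "'a set \<Rightarrow> ('a \<Rightarrow> 'a \<Rightarrow> bool) \<Rightarrow> ('a \<Rightarrow> bool) \<Rightarrow> 'a set \<Rightarrow> int" where
  "dtrans V E c F =
     int (card (trans_edges V E c - trans_edges V E (flip c F)))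
   - int (card (trans_edges V E (flip c F) - trans_edges V E c))"

definition strongly_maximal ::
  "'a set \<Rightarrow> ('a \<Rightarrow> 'a \<Rightarrow> bool) \<Rightarrow> ('a \<Rightarrow> bool) \<Rightarrow> 'a set \<Rightarrow> bool" where
  "strongly_maximal V E c A \<longleftrightarrow>
     (\<forall>F. finite F \<and> F \<subseteq> A \<and> (\<forall>v\<in>F. finite_deg V E v) \<longrightarrow> dtrans V E c F \<ge> 0)"

definition close_in ::
  "'a set \<Rightarrow> ('a \<Rightarrow> 'a \<Rightarrow> bool) \<Rightarrow> ('a \<Rightarrow> bool) \<Rightarrow> ('a \<Rightarrow> bool) \<Rightarrow> 'a set \<Rightarrow> bool" where
  "close_in V E c c' A \<longleftrightarrow>
     (let S = {v\<in>V. c v \<noteq> c' v} in finite S \<and> (\<forall>v\<in>S. finite_deg V E v) \<and> S \<subseteq> A)"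

definition almost_strongly_maximal ::
  "'a set \<Rightarrow> ('a \<Rightarrow> 'a \<Rightarrow> bool) \<Rightarrow> ('a \<Rightarrow> bool) \<Rightarrow> 'a set \<Rightarrow> bool" where
  "almost_strongly_maximal V E c A \<longleftrightarrow>
     (\<exists>c'. close_in V E c c' A \<and> strongly_maximal V E c' A)"

end

theory Submission
  imports Defs
begin

text \<open>Changing a coloring on a finite set F of finite-degree vertices only affects the finitely
many edges at F, so dtrans satisfies a cocycle identity: flipping S and then F has the effect
of flipping their symmetric difference. Compared with G[D], the coloring of G only gains the
finitely many edges at V - D, so dtrans of any extension of c is bounded below by minus their
number. A finite set minimising dtrans therefore exists, and by the cocycle identity flipping
it yields a strongly maximal coloring close to the extension.\<close>

definition card_balance :: "'a set \<Rightarrow> 'a set \<Rightarrow> int" where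
  "card_balance A B = int (card (A - B)) - int (card (B - A))"

lemma card_balance_localize:
  assumes "finite U" "A - B \<subseteq> U" "B - A \<subseteq> U"
  shows "card_balance A B = int (card (A \<inter> U)) - int (card (B \<inter> U))"
proof -
  have split: "A \<inter> U = (A - B) \<union> (A \<inter> B \<inter> U)" "B \<inter> U = (B - A) \<union> (A \<inter> B \<inter> U)"
    using assms by blast+
  have fin: "finite (A - B)" "finite (B - A)" "finite (A \<inter> B \<inter> U)"
    using assms finite_subset by auto
  have "card (A \<inter> U) = card (A - B) + card (A \<inter> B \<inter> U)"
    unfolding split by (rule card_Un_disjoint) (use fin in auto)
  moreover have "card (B \<inter> U) = card (B - A) + card (A \<inter> B \<inter> U)"
    unfolding split by (rule card_Un_disjoint) (use fin in auto)
  ultimately show ?thesis by (simp add: card_balance_def)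
qed

lemma card_balance_trans:
  assumes "finite (X - Y)" "finite (Y - X)" "finite (Y - Z)" "finite (Z - Y)"
  shows "card_balance X Z = card_balance X Y + card_balance Y Z"
proof -
  define U where "U = (X - Y) \<union> (Y - X) \<union> (Y - Z) \<union> (Z - Y)"
  have "finite U" using assms by (simp add: U_def)
  moreover have "X - Z \<subseteq> U" "Z - X \<subseteq> U" "X - Y \<subseteq> U" "Y - X \<subseteq> U" "Y - Z \<subseteq> U" "Z - Y \<subseteq> U"
    unfolding U_def by blast+
  ultimately show ?thesis by (simp add: card_balance_localize)
qed

lemma card_balance_Diff_ge:
  assumes "finite R" "finite (X - Y)" "finite (Y - X)"
  shows "card_balance (X - R) (Y - R) - int (card R) \<le> card_balance X Y"
proof -
  define U where "U = (X - Y) \<union> (Y - X)"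
  have U: "finite U" "X - Y \<subseteq> U" "Y - X \<subseteq> U" "(X - R) - (Y - R) \<subseteq> U" "(Y - R) - (X - R) \<subseteq> U"
    using assms by (auto simp: U_def)
  have "card ((X - R) \<inter> U) \<le> card (X \<inter> U)"
    using U by (intro card_mono) auto
  moreover have "card (Y \<inter> U) \<le> card (((Y - R) \<inter> U) \<union> R)"
    using U assms by (intro card_mono) auto
  moreover have "card (((Y - R) \<inter> U) \<union> R) \<le> card ((Y - R) \<inter> U) + card R"
    by (rule card_Un_le)
  ultimately show ?thesis
    using card_balance_localize[OF U(1,2,3)] card_balance_localize[OF U(1,4,5)] by linarith
qed

lemma dtrans_eq_card_balance:
  "dtrans V E c F = card_balance (trans_edges V E c) (trans_edges V E (flip c F))"
  by (simp add: dtrans_def card_balance_def)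

lemma flip_flip: "flip (flip c S) F = flip c (sym_diff S F)"
  by (auto simp: flip_def)

lemma trans_edgesI:
  "u \<in> V \<Longrightarrow> v \<in> V \<Longrightarrow> E u v \<Longrightarrow> c u \<noteq> c v \<Longrightarrow> {u, v} \<in> trans_edges V E c"
  unfolding trans_edges_def by blast

definition incident_edges :: "'a set \<Rightarrow> ('a \<Rightarrow> 'a \<Rightarrow> bool) \<Rightarrow> 'a set \<Rightarrow> 'a set set" where
  "incident_edges V E W = (\<Union>w\<in>W. (\<lambda>v. {w, v}) ` nbhd V E w)"

lemma finite_incident_edges:
  "finite W \<Longrightarrow> \<forall>w\<in>W. finite_deg V E w \<Longrightarrow> finite (incident_edges V E W)"
  by (auto simp: incident_edges_def finite_deg_def)

lemma edge_in_incident_edges: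
  assumes "simple_graph V E" "u \<in> V" "v \<in> V" "E u v" "u \<in> W \<or> v \<in> W"
  shows "{u, v} \<in> incident_edges V E W"
proof -
  have "E v u" using assms unfolding simple_graph_def by blast
  then show ?thesis
    using assms unfolding incident_edges_def nbhd_def by (auto simp: insert_commute)
qed

lemma trans_edges_diff_subset_incident:
  assumes "simple_graph V E" "\<forall>x. x \<notin> F \<longrightarrow> c1 x = c2 x"
  shows "trans_edges V E c1 - trans_edges V E c2 \<subseteq> incident_edges V E F"
proof
  fix e assume e: "e \<in> trans_edges V E c1 - trans_edges V E c2"
  then obtain u v where uv: "e = {u, v}" "u \<in> V" "v \<in> V" "E u v" "c1 u \<noteq> c1 v"
    unfolding trans_edges_def by blast
  have "u \<in> F \<or> v \<in> F"
    using e uv assms(2) unfolding trans_edges_def by fastforce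
  then show "e \<in> incident_edges V E F"
    using edge_in_incident_edges[OF assms(1) uv(2-4)] uv(1) by blast
qed

lemma finite_trans_edges_flip_diff:
  assumes "simple_graph V E" "finite F" "\<forall>v\<in>F. finite_deg V E v"
  shows "finite (trans_edges V E c - trans_edges V E (flip c F))"
    and "finite (trans_edges V E (flip c F) - trans_edges V E c)"
  by (rule finite_subset[OF trans_edges_diff_subset_incident finite_incident_edges];
      use assms in \<open>simp add: flip_def\<close>)+

lemma dtrans_flip_flip:
  assumes "simple_graph V E"
    and "finite S" "\<forall>v\<in>S. finite_deg V E v" "finite F" "\<forall>v\<in>F. finite_deg V E v"
  shows "dtrans V E c (sym_diff S F) = dtrans V E c S + dtrans V E (flip c S) F"
  unfolding dtrans_eq_card_balance flip_flip[symmetric]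
  by (rule card_balance_trans) (use finite_trans_edges_flip_diff assms in auto)

lemma almost_strongly_maximal_if_dtrans_bounded_below:
  assumes sg: "simple_graph V E"
    and bound: "\<And>S. finite S \<Longrightarrow> S \<subseteq> A \<Longrightarrow> \<forall>v\<in>S. finite_deg V E v \<Longrightarrow> dtrans V E c S \<ge> b"
  shows "almost_strongly_maximal V E c A"
proof -
  define adm where "adm S \<longleftrightarrow> finite S \<and> S \<subseteq> A \<and> (\<forall>v\<in>S. finite_deg V E v)" for S
  have "adm {}" by (simp add: adm_def)
  \<comment> \<open>shifted by b, dtrans becomes nat-valued on admissible sets, so it attains a minimum\<close>
  then obtain S0 where S0: "adm S0"
    and least: "\<And>S. adm S \<Longrightarrow> nat (dtrans V E c S0 - b) \<le> nat (dtrans V E c S - b)"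
    using ex_has_least_nat[of adm _ "\<lambda>S. nat (dtrans V E c S - b)"] by blast
  have min: "dtrans V E c S0 \<le> dtrans V E c S" if "adm S" for S
    using least[OF that] bound[of S] bound[of S0] that S0 unfolding adm_def by linarith
  define c' where "c' = flip c S0"
  have "{v\<in>V. c v \<noteq> c' v} \<subseteq> S0" by (auto simp: c'_def flip_def)
  then have "close_in V E c c' A"
    using S0 finite_subset[of _ S0] unfolding close_in_def adm_def Let_def by blast
  moreover have "strongly_maximal V E c' A"
    unfolding strongly_maximal_def
  proof (intro allI impI)
    fix F assume F: "finite F \<and> F \<subseteq> A \<and> (\<forall>v\<in>F. finite_deg V E v)"
    then have "adm (sym_diff S0 F)" using S0 by (auto simp: adm_def)
    moreover have "dtrans V E c (sym_diff S0 F) = dtrans V E c S0 + dtrans V E c' F"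
      unfolding c'_def using dtrans_flip_flip[OF sg] S0 F by (simp add: adm_def)
    ultimately show "dtrans V E c' F \<ge> 0" using min[of "sym_diff S0 F"] by linarith
  qed
  ultimately show ?thesis unfolding almost_strongly_maximal_def by blast
qed

lemma trans_edges_induced_subgraph:
  assumes sg: "simple_graph V E" and "D \<subseteq> V" and agree: "\<forall>v\<in>D. g v = f v"
  shows "trans_edges D E g = trans_edges V E f - incident_edges V E (V - D)"
proof (intro equalityI subsetI)
  fix e assume "e \<in> trans_edges D E g"
  then obtain u v where uv: "e = {u, v}" "u \<in> D" "v \<in> D" "E u v" "g u \<noteq> g v"
    unfolding trans_edges_def by blast
  have "e \<in> trans_edges V E f"
    unfolding uv(1) using uv agree \<open>D \<subseteq> V\<close> by (intro trans_edgesI) auto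
  moreover have "e \<notin> incident_edges V E (V - D)"
    using uv(1-3) unfolding incident_edges_def by (auto simp: doubleton_eq_iff)
  ultimately show "e \<in> trans_edges V E f - incident_edges V E (V - D)" by blast
next
  fix e assume e: "e \<in> trans_edges V E f - incident_edges V E (V - D)"
  then obtain u v where uv: "e = {u, v}" "u \<in> V" "v \<in> V" "E u v" "f u \<noteq> f v"
    unfolding trans_edges_def by blast
  have "u \<in> D" "v \<in> D"
    using e edge_in_incident_edges[OF sg uv(2-4), of "V - D"] uv(1-3) by blast+
  then show "e \<in> trans_edges D E g"
    unfolding uv(1) using uv agree by (intro trans_edgesI) auto
qed

lemma finite_deg_induced_subgraph: "D \<subseteq> V \<Longrightarrow> finite_deg V E v \<Longrightarrow> finite_deg D E v"
  unfolding finite_deg_def nbhd_def by (auto elim: rev_finite_subset)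

lemma dtrans_extension_ge:
  assumes sg: "simple_graph V E" and "D \<subseteq> V" "\<forall>v\<in>D. ct v = c v"
    and "finite (V - D)" "\<forall>v\<in>V - D. finite_deg V E v"
    and S: "finite S" "\<forall>v\<in>S. finite_deg V E v"
  shows "dtrans D E c S - int (card (incident_edges V E (V - D))) \<le> dtrans V E ct S"
proof -
  let ?R = "incident_edges V E (V - D)"
  have "\<forall>v\<in>D. flip c S v = flip ct S v" using assms by (simp add: flip_def)
  then have "trans_edges D E c = trans_edges V E ct - ?R"
    and "trans_edges D E (flip c S) = trans_edges V E (flip ct S) - ?R"
    using assms by (simp_all add: trans_edges_induced_subgraph)
  moreover have "card_balance (trans_edges V E ct - ?R) (trans_edges V E (flip ct S) - ?R)
      - int (card ?R) \<le> card_balance (trans_edges V E ct) (trans_edges V E (flip ct S))"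
    using assms by (intro card_balance_Diff_ge finite_incident_edges finite_trans_edges_flip_diff)
  ultimately show ?thesis by (simp only: dtrans_eq_card_balance)
qed

theorem corollary2p5:
  fixes V D :: "'a set" and E :: "'a \<Rightarrow> 'a \<Rightarrow> bool" and c ct :: "'a \<Rightarrow> bool"
  assumes "simple_graph V E"
    and "D \<subseteq> V"
    and "finite (V - D)"
    and "\<forall>v\<in>V - D. finite_deg V E v"
    and "strongly_maximal D E c D"
    and "\<forall>v\<in>D. ct v = c v"
  shows "almost_strongly_maximal V E ct D"
proof (rule almost_strongly_maximal_if_dtrans_bounded_below[OF assms(1)])
  fix S assume S: "finite S" "S \<subseteq> D" "\<forall>v\<in>S. finite_deg V E v"
  have "\<forall>v\<in>S. finite_deg D E v"
    using S(3) finite_deg_induced_subgraph[OF assms(2)] by blast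
  then have "dtrans D E c S \<ge> 0"
    using assms(5) S(1,2) unfolding strongly_maximal_def by blast
  then show "- int (card (incident_edges V E (V - D))) \<le> dtrans V E ct S"
    using dtrans_extension_ge[OF assms(1,2,6,3,4) S(1,3)] by linarith
qed

end
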